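(* Let $n\ge 2$ and let $a_1,\dots,a_n\in\mathbb{C}$. Let $V(a_1,\dots,a_n)$ be the $n\times n$ Vieta matrix of $a_1,\dots,a_n$ (defined in the context). Then \[ \det V(a_1,\dots,a_n)=\prod_{1\le i<k\le n}(a_i-a_k). \]
   Context: For a finite list of numbers $b_1,\dots,b_m$ and an integer $j\ge 0$, let $e_j(b_1,\dots,b_m)$ denote the $j$-th elementary symmetric polynomial, i.e. $e_0=1$ and $e_j(b_1,\dots,b_m)=\sum_{1\le l_1<\dots<l_j\le m} b_{l_1}\cdots b_{l_j}$ for $1\le j\le m$. The Vieta matrix $V(a_1,\dots,a_n)$ of $a_1,\dots,a_n$ is the $n\times n$ matrix whose entry in row $j+1$ and column $i$ (for $j=0,1,\dots,n-1$ and $i=1,\dots,n$) is $e_j(a_1,\dots,a_{i-1},a_{i+1},\dots,a_n)$, the $j$-th elementary symmetric polynomial of the $n-1$ numbers obtained by omitting $a_i$. Thus its first row is all $1$'s, its second row has entries $\sum_{l\ne i}a_l$, and its last row has entries $\prod_{l\ne i}a_l$. For example, for $n=3$ it is $\begin{pmatrix}1&1&1\\ a_2+a_3&a_1+a_3&a_1+a_2\\ a_2a_3&a_1a_3&a_1a_2\end{pmatrix}$. *)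

theory Defs
  imports Complex_Main "Jordan_Normal_Form.Determinant"
begin

definition esym :: "nat \<Rightarrow> 'a::comm_ring_1 list \<Rightarrow> 'a" where
  "esym j bs = (\<Sum>S\<in>{S. S \<subseteq> {0..<length bs} \<and> card S = j}. \<Prod>l\<in>S. bs ! l)"

definition vieta_mat :: "'a::comm_ring_1 list \<Rightarrow> 'a mat" where
  "vieta_mat as = mat (length as) (length as)
     (\<lambda>(j, i). esym j (take i as @ drop (Suc i) as))"

end

theory Submission
  imports Defs
begin

text \<open>Induction on the number of variables, adjoining a new last variable x.
  Subtracting the last column of V(a_1, ..., a_n, x) from every other column and using
  e_{j+1}(L, x) - e_{j+1}(L, a_c) = (x - a_c) e_j(L), the first row becomes the unit vector of
  the last column, and the complementary minor is V(a_1, ..., a_n) with column c multiplied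
  by x - a_c. The identity holds over any commutative ring and for every n.\<close>

lemma subsets_card_Suc_insert:
  assumes "finite A" "a \<notin> A"
  shows "{S. S \<subseteq> insert a A \<and> card S = Suc k}
    = {S. S \<subseteq> A \<and> card S = Suc k} \<union> insert a ` {S. S \<subseteq> A \<and> card S = k}"
proof (intro equalityI subsetI)
  fix S assume S: "S \<in> {S. S \<subseteq> insert a A \<and> card S = Suc k}"
  show "S \<in> {S. S \<subseteq> A \<and> card S = Suc k} \<union> insert a ` {S. S \<subseteq> A \<and> card S = k}"
  proof (cases "a \<in> S")
    case True
    then have "S = insert a (S - {a})" by blast
    moreover have "finite S" using S assms(1) finite_subset by auto
    ultimately show ?thesis using S True by (auto intro!: image_eqI[of _ _ "S - {a}"])
  qed (use S in auto)
next
  fix S assume "S \<in> {S. S \<subseteq> A \<and> card S = Suc k} \<union> insert a ` {S. S \<subseteq> A \<and> card S = k}"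
  then show "S \<in> {S. S \<subseteq> insert a A \<and> card S = Suc k}"
  proof
    assume "S \<in> insert a ` {S. S \<subseteq> A \<and> card S = k}"
    then obtain T where "T \<subseteq> A" "card T = k" "S = insert a T" by blast
    moreover have "finite T" "a \<notin> T" using calculation(1) assms finite_subset by auto
    ultimately show ?thesis by auto
  qed auto
qed

lemma esym_0 [simp]: "esym 0 xs = 1"
proof -
  have "{S. S \<subseteq> {0..<length xs} \<and> card S = 0} = {{}}"
    by (auto dest: finite_subset)
  then show ?thesis by (simp add: esym_def)
qed

lemma esym_Suc_Nil [simp]: "esym (Suc j) ([] :: 'a::comm_ring_1 list) = 0"
proof -
  have "{S. S \<subseteq> {0..<length ([] :: 'a list)} \<and> card S = Suc j} = {}" by auto
  then show ?thesis by (simp only: esym_def sum.empty)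
qed

lemma esym_Suc_snoc:
  "esym (Suc j) (xs @ [x]) = esym (Suc j) xs + x * esym j xs"
proof -
  let ?n = "length xs"
  let ?P = "\<lambda>k. {S. S \<subseteq> {0..<?n} \<and> card S = k}"
  let ?f = "\<lambda>S. \<Prod>l\<in>S. (xs @ [x]) ! l"
  have fin: "finite (?P k)" for k by (rule finite_subset[of _ "Pow {0..<?n}"]) auto
  have inj: "inj_on (insert ?n) (?P j)"
  proof (rule inj_onI)
    fix S T assume "S \<in> ?P j" "T \<in> ?P j" "insert ?n S = insert ?n T"
    moreover have "?n \<notin> S" "?n \<notin> T" using calculation by auto
    ultimately show "S = T" by (metis Diff_insert_absorb)
  qed
  have prod_snoc: "?f S = (\<Prod>l\<in>S. xs ! l)" if "S \<subseteq> {0..<?n}" for S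
    using that by (intro prod.cong) (auto simp: nth_append)
  have prod_insert: "?f (insert ?n S) = x * (\<Prod>l\<in>S. xs ! l)" if "S \<in> ?P j" for S
  proof -
    have "finite S" "?n \<notin> S" using that finite_subset by auto
    then show ?thesis using that by (simp add: prod_snoc)
  qed
  have "esym (Suc j) (xs @ [x]) = sum ?f (?P (Suc j) \<union> insert ?n ` ?P j)"
    unfolding esym_def using subsets_card_Suc_insert[of "{0..<?n}" ?n j]
    by (simp add: atLeast0_lessThan_Suc)
  also have "\<dots> = sum ?f (?P (Suc j)) + sum ?f (insert ?n ` ?P j)"
    by (rule sum.union_disjoint[OF fin finite_imageI[OF fin]]) auto
  also have "\<dots> = sum ?f (?P (Suc j)) + sum (?f \<circ> insert ?n) (?P j)"
    by (simp only: sum.reindex[OF inj])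
  also have "\<dots> = esym (Suc j) xs + x * esym j xs"
    unfolding esym_def sum_distrib_left
    by (intro arg_cong2[where f = "(+)"] sum.cong) (simp_all add: prod_snoc prod_insert)
  finally show ?thesis .
qed

lemma esym_Suc_append_Cons:
  "esym (Suc j) (xs @ y # ys) = esym (Suc j) (xs @ ys) + y * esym j (xs @ ys)"
proof (induction ys arbitrary: j rule: rev_induct)
  case Nil
  show ?case using esym_Suc_snoc[of j xs y] by simp
next
  case (snoc z ys)
  have IH_j: "esym (Suc j) (xs @ y # ys) = esym (Suc j) (xs @ ys) + y * esym j (xs @ ys)"
    by (rule snoc.IH)
  have IH_pred: "esym j (xs @ y # ys) = esym j (xs @ ys) + y * esym (j - 1) (xs @ ys)" if "j > 0"
    using snoc.IH[of "j - 1"] that by simp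
  have "esym (Suc j) (xs @ y # ys @ [z]) = esym (Suc j) (xs @ y # ys) + z * esym j (xs @ y # ys)"
    using esym_Suc_snoc[of j "xs @ y # ys" z] by simp
  moreover have "esym (Suc j) (xs @ ys @ [z]) = esym (Suc j) (xs @ ys) + z * esym j (xs @ ys)"
    using esym_Suc_snoc[of j "xs @ ys" z] by simp
  moreover have "esym j (xs @ ys @ [z]) = esym j (xs @ ys) + z * esym (j - 1) (xs @ ys)" if "j > 0"
    using esym_Suc_snoc[of "j - 1" "xs @ ys" z] that by simp
  ultimately show ?case using IH_j IH_pred
    by (cases "j = 0") (simp_all add: algebra_simps)
qed

lemma esym_Suc_remove_nth_snoc_diff:
  assumes "c < length bs"
  shows "esym (Suc j) (take c bs @ drop (Suc c) bs @ [x]) - esym (Suc j) bs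
    = (x - bs ! c) * esym j (take c bs @ drop (Suc c) bs)"
proof -
  have "bs = take c bs @ bs ! c # drop (Suc c) bs"
    using assms by (simp add: id_take_nth_drop)
  then have "esym (Suc j) bs = esym (Suc j) (take c bs @ drop (Suc c) bs)
      + bs ! c * esym j (take c bs @ drop (Suc c) bs)"
    by (metis esym_Suc_append_Cons)
  then show ?thesis
    using esym_Suc_snoc[of j "take c bs @ drop (Suc c) bs" x] by (simp add: algebra_simps)
qed

lemma det_subtract_last_column:
  fixes A :: "'a::comm_ring_1 mat"
  assumes A: "A \<in> carrier_mat (Suc m) (Suc m)"
  shows "det (mat (Suc m) (Suc m)
      (\<lambda>(j, c). if c = m then A $$ (j, m) else A $$ (j, c) - A $$ (j, m))) = det A"
proof -
  define U :: "'a mat" where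
    "U = mat (Suc m) (Suc m) (\<lambda>(r, c). of_bool (r = c) - of_bool (r = m \<and> c \<noteq> m))"
  have U: "U \<in> carrier_mat (Suc m) (Suc m)" by (simp add: U_def)
  have "det U = prod_list (diag_mat U)"
    by (rule det_lower_triangular[OF _ U]) (auto simp: U_def)
  also have "\<dots> = 1"
    unfolding prod_list_diag_prod using U by (simp add: U_def)
  finally have det_U: "det U = 1" .
  have "A * U = mat (Suc m) (Suc m)
      (\<lambda>(j, c). if c = m then A $$ (j, m) else A $$ (j, c) - A $$ (j, m))"
  proof (rule eq_matI)
    fix j c assume "j < dim_row (mat (Suc m) (Suc m)
      (\<lambda>(j, c). if c = m then A $$ (j, m) else A $$ (j, c) - A $$ (j, m)))"
      "c < dim_col (mat (Suc m) (Suc m)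
      (\<lambda>(j, c). if c = m then A $$ (j, m) else A $$ (j, c) - A $$ (j, m)))"
    then have jc: "j < Suc m" "c < Suc m" by auto
    have "(A * U) $$ (j, c) = (\<Sum>r<Suc m. A $$ (j, r) * (of_bool (r = c) - of_bool (r = m \<and> c \<noteq> m)))"
      using A U jc by (simp add: scalar_prod_def U_def atLeast0LessThan)
    also have "\<dots> = (\<Sum>r<Suc m. if r = c then A $$ (j, r) else 0)
        - (\<Sum>r<Suc m. if r = m \<and> c \<noteq> m then A $$ (j, r) else 0)"
      unfolding sum_subtractf[symmetric] by (rule sum.cong) auto
    finally show "(A * U) $$ (j, c) = mat (Suc m) (Suc m)
      (\<lambda>(j, c). if c = m then A $$ (j, m) else A $$ (j, c) - A $$ (j, m)) $$ (j, c)"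
      using jc by (simp add: sum.delta)
  qed (use A U in auto)
  then show ?thesis using det_mult[OF A U] det_U by simp
qed

lemma det_unit_first_row:
  fixes B :: "'a::comm_ring_1 mat"
  assumes B: "B \<in> carrier_mat (Suc m) (Suc m)"
    and row: "\<And>c. c < Suc m \<Longrightarrow> B $$ (0, c) = of_bool (c = m)"
  shows "det B = (-1) ^ m * det (mat_delete B 0 m)"
proof -
  have "det B = (\<Sum>c<Suc m. B $$ (0, c) * cofactor B 0 c)"
    by (rule laplace_expansion_row[OF B]) simp
  also have "\<dots> = (\<Sum>c<Suc m. if c = m then cofactor B 0 c else 0)"
    by (rule sum.cong) (simp_all add: row)
  also have "\<dots> = cofactor B 0 m" by (simp add: sum.delta')
  finally show ?thesis by (simp add: cofactor_def)
qed

lemma det_scale_columns: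
  fixes A :: "'a::comm_ring_1 mat"
  assumes A: "A \<in> carrier_mat m m"
  shows "det (mat m m (\<lambda>(i, k). A $$ (i, k) * d k)) = det A * (\<Prod>k<m. d k)"
proof -
  define D :: "'a mat" where "D = mat m m (\<lambda>(i, k). if i = k then d k else 0)"
  have D: "D \<in> carrier_mat m m" by (simp add: D_def)
  have "det D = prod_list (diag_mat D)"
    by (rule det_lower_triangular[OF _ D]) (auto simp: D_def)
  also have "\<dots> = (\<Prod>k<m. d k)"
    unfolding prod_list_diag_prod using D by (simp add: D_def atLeast0LessThan)
  finally have det_D: "det D = (\<Prod>k<m. d k)" .
  have "A * D = mat m m (\<lambda>(i, k). A $$ (i, k) * d k)"
  proof (rule eq_matI)
    fix i k assume "i < dim_row (mat m m (\<lambda>(i, k). A $$ (i, k) * d k))"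
      "k < dim_col (mat m m (\<lambda>(i, k). A $$ (i, k) * d k))"
    then have ik: "i < m" "k < m" by auto
    have "(A * D) $$ (i, k) = (\<Sum>r\<in>{0..<m}. A $$ (i, r) * (if r = k then d k else 0))"
      using A D ik by (simp add: scalar_prod_def D_def)
    also have "\<dots> = (\<Sum>r\<in>{0..<m}. if r = k then A $$ (i, r) * d k else 0)"
      by (rule sum.cong) auto
    finally show "(A * D) $$ (i, k) = mat m m (\<lambda>(i, k). A $$ (i, k) * d k) $$ (i, k)"
      using ik by simp
  qed (use A D in auto)
  then show ?thesis using det_mult[OF A D] det_D by simp
qed

lemma prod_pairs_lessThan_Suc:
  "(\<Prod>i<Suc m. \<Prod>k\<in>{i<..<Suc m}. f i k) = (\<Prod>i<m. \<Prod>k\<in>{i<..<m}. f i k) * (\<Prod>i<m. f i m)"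
proof -
  have "(\<Prod>k\<in>{i<..<Suc m}. f i k) = f i m * (\<Prod>k\<in>{i<..<m}. f i k)" if "i < m" for i
  proof -
    have "{i<..<Suc m} = insert m {i<..<m}" using that by auto
    then show ?thesis by simp
  qed
  then have "(\<Prod>i<m. \<Prod>k\<in>{i<..<Suc m}. f i k) = (\<Prod>i<m. f i m * (\<Prod>k\<in>{i<..<m}. f i k))"
    by (intro prod.cong) simp_all
  moreover have "{m<..<Suc m} = {}" by auto
  ultimately show ?thesis by (simp add: prod.distrib mult.commute)
qed

lemma vieta_mat_carrier [simp]: "vieta_mat as \<in> carrier_mat (length as) (length as)"
  by (simp add: vieta_mat_def)

lemma index_vieta_mat:
  "j < length as \<Longrightarrow> i < length as \<Longrightarrow>
    vieta_mat as $$ (j, i) = esym j (take i as @ drop (Suc i) as)"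
  by (simp add: vieta_mat_def)

lemma det_vieta_mat_snoc:
  "det (vieta_mat (bs @ [x])) = det (vieta_mat bs) * (\<Prod>k<length bs. bs ! k - x)"
proof -
  define m where "m = length bs"
  define A where "A = vieta_mat (bs @ [x])"
  define B where "B = mat (Suc m) (Suc m)
      (\<lambda>(j, c). if c = m then A $$ (j, m) else A $$ (j, c) - A $$ (j, m))"
  have A: "A \<in> carrier_mat (Suc m) (Suc m)"
    using vieta_mat_carrier[of "bs @ [x]"] by (simp add: A_def m_def)
  have B: "B \<in> carrier_mat (Suc m) (Suc m)" by (simp add: B_def)
  have A_last: "A $$ (j, m) = esym j bs" if "j < Suc m" for j
    using that by (simp add: A_def m_def index_vieta_mat)
  have A_col: "A $$ (j, c) = esym j (take c bs @ drop (Suc c) bs @ [x])" if "j < Suc m" "c < m" for j c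
    using that by (simp add: A_def m_def index_vieta_mat)
  have B_row: "B $$ (0, c) = of_bool (c = m)" if "c < Suc m" for c
    using that by (simp add: B_def A_last A_col)
  have minor: "mat_delete B 0 m = mat m m (\<lambda>(i, k). vieta_mat bs $$ (i, k) * (x - bs ! k))"
  proof (rule eq_matI)
    fix i k assume "i < dim_row (mat m m (\<lambda>(i, k). vieta_mat bs $$ (i, k) * (x - bs ! k)))"
      "k < dim_col (mat m m (\<lambda>(i, k). vieta_mat bs $$ (i, k) * (x - bs ! k)))"
    then have ik: "i < m" "k < m" by auto
    have "mat_delete B 0 m $$ (i, k) = B $$ (Suc i, k)"
      using mat_delete_index[OF B, of 0 m i k] ik by simp
    also have "\<dots> = (x - bs ! k) * esym i (take k bs @ drop (Suc k) bs)"
      using ik esym_Suc_remove_nth_snoc_diff[of k bs] by (simp add: B_def A_last A_col m_def[symmetric])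
    finally show "mat_delete B 0 m $$ (i, k)
        = mat m m (\<lambda>(i, k). vieta_mat bs $$ (i, k) * (x - bs ! k)) $$ (i, k)"
      using ik by (simp add: index_vieta_mat m_def)
  qed (use B in auto)
  have "det A = det B"
    unfolding B_def by (rule det_subtract_last_column[OF A, symmetric])
  also have "\<dots> = (-1) ^ m * det (mat_delete B 0 m)"
    by (rule det_unit_first_row[OF B B_row])
  also have "\<dots> = (-1) ^ m * (det (vieta_mat bs) * (\<Prod>k<m. x - bs ! k))"
    unfolding minor by (simp add: det_scale_columns m_def)
  also have "\<dots> = det (vieta_mat bs) * (\<Prod>k<m. bs ! k - x)"
    using prod_uminus[of "\<lambda>k. x - bs ! k" "{..<m}"] by (simp add: ac_simps)
  finally show ?thesis by (simp add: A_def m_def)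
qed

lemma det_vieta_mat:
  fixes as :: "'a::comm_ring_1 list"
  shows "det (vieta_mat as) = (\<Prod>i<length as. \<Prod>k\<in>{i<..<length as}. as ! i - as ! k)"
proof (induction as rule: rev_induct)
  case Nil
  show ?case using vieta_mat_carrier[of "[] :: 'a list"] by simp
next
  case (snoc x bs)
  let ?f = "\<lambda>i k. (bs @ [x]) ! i - (bs @ [x]) ! k"
  have "(\<Prod>i<length bs. \<Prod>k\<in>{i<..<length bs}. ?f i k)
      = (\<Prod>i<length bs. \<Prod>k\<in>{i<..<length bs}. bs ! i - bs ! k)"
    by (intro prod.cong) (simp_all add: nth_append)
  moreover have "(\<Prod>i<length bs. ?f i (length bs)) = (\<Prod>i<length bs. bs ! i - x)"
    by (intro prod.cong) (simp_all add: nth_append)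
  ultimately show ?case
    using prod_pairs_lessThan_Suc[of ?f "length bs"] by (simp add: det_vieta_mat_snoc snoc.IH)
qed

theorem theorem1:
  fixes as :: "complex list"
  assumes "length as \<ge> 2"
  shows "det (vieta_mat as) =
    (\<Prod>i<length as. \<Prod>k\<in>{i<..<length as}. as ! i - as ! k)"
  by (rule det_vieta_mat)

end
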